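(* Let $\mathbb{D}=\{z\in\mathbb{C}:|z|<1\}$ and let $z_1,z_2\in\mathbb{D}\setminus\{0\}$ be distinct. Let $z',z''$ be the two intersection points of the perpendicular bisector of the segment $[z_1,z_2]$ with the unit circle, namely \[ \{z',z''\}=\left\{\frac{z_1-z_2}{|z_1-z_2|}\left(\frac{|z_1|^2-|z_2|^2}{2|z_1-z_2|}\pm i\sqrt{1-\Big(\frac{|z_1|^2-|z_2|^2}{2|z_1-z_2|}\Big)^2}\right)\right\}. \] Then \[ b_{\mathbb{D},\infty}(z_1,z_2)=\begin{cases}\dfrac{|z_1-z_2|}{1-\min\{|z_1|,|z_2|\}}, & \text{if } |z_1|\le 1-\Big|z_2-\frac{z_1}{|z_1|}\Big| \text{ or } |z_2|\le 1-\Big|z_1-\frac{z_2}{|z_2|}\Big|,\\[2mm] \dfrac{|z_1-z_2|}{\min\{|z'-z_1|,|z''-z_1|\}}, & \text{otherwise}.\end{cases} \]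
   Context: For $z_1,z_2\in\mathbb{D}$, $b_{\mathbb{D},\infty}(z_1,z_2)=\sup_{w\in\partial\mathbb{D}}\frac{|z_1-z_2|}{\max\{|z_1-w|,|z_2-w|\}}$. *)

theory Defs
  imports "HOL-Analysis.Analysis"
begin

definition b_D_inf :: "complex \<Rightarrow> complex \<Rightarrow> real" where
  "b_D_inf z1 z2 =
     (SUP w\<in>sphere 0 1. cmod (z1 - z2) / max (cmod (z1 - w)) (cmod (z2 - w)))"

end

theory Submission
  imports Defs
begin

text \<open>Write m for the minimum over the unit circle of max(|z1 - w|, |z2 - w|), so that
  b = |z1 - z2| / m. Every w on the circle has |z1 - w| \<ge> 1 - |z1|, with equality at the radial
  projection z1/|z1|; if z2 is at least as close to that point as z1, then m = 1 - |z1|.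
  Otherwise rotate so that z1 - z2 is a positive real: each radial projection zk/|zk| then lies
  strictly on zk's side of the perpendicular bisector. On the arc of the circle on z2's side the
  maximum is |z1 - w|, and since the distance from z1 to a point of the circle grows with its
  angular distance from z1/|z1|, which lies off the arc, it is minimised at an endpoint of the
  arc, i.e. at z' or z''. The arc on z1's side is symmetric, so m = min(|z' - z1|, |z'' - z1|).\<close>

lemma b_D_inf_commute: "b_D_inf z1 z2 = b_D_inf z2 z1"
  unfolding b_D_inf_def by (simp add: norm_minus_commute max.commute)

lemma b_D_inf_mult_unit:
  assumes "cmod u = 1"
  shows "b_D_inf (u * z1) (u * z2) = b_D_inf z1 z2"
proof -
  have rotate_sphere: "(*) u ` sphere 0 1 = sphere 0 1"
  proof (intro equalityI subsetI)
    fix w :: complex assume w: "w \<in> sphere 0 1"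
    have "u * cnj u = 1"
      using assms complex_norm_square[of u] by simp
    then have "w = u * (cnj u * w)"
      by (metis mult.assoc mult_1)
    then show "w \<in> (*) u ` sphere 0 1"
      by (rule image_eqI) (use assms w in \<open>simp add: norm_mult\<close>)
  qed (use assms in \<open>auto simp: norm_mult\<close>)
  have rotate_dist: "cmod (u * z - u * w) = cmod (z - w)" for z w
    using assms by (simp add: norm_mult flip: right_diff_distrib)
  have "b_D_inf (u * z1) (u * z2) =
      (SUP w\<in>(*) u ` sphere 0 1. cmod (u * z1 - u * z2) / max (cmod (u * z1 - w)) (cmod (u * z2 - w)))"
    unfolding b_D_inf_def rotate_sphere ..
  also have "\<dots> = b_D_inf z1 z2"
    unfolding b_D_inf_def image_image rotate_dist ..
  finally show ?thesis .
qed

lemma b_D_inf_eq_if_min_max_attained: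
  assumes "w0 \<in> sphere 0 1" "max (cmod (z1 - w0)) (cmod (z2 - w0)) = m" "0 < m"
    and "\<And>w. w \<in> sphere 0 1 \<Longrightarrow> m \<le> max (cmod (z1 - w)) (cmod (z2 - w))"
  shows "b_D_inf z1 z2 = cmod (z1 - z2) / m"
  unfolding b_D_inf_def
proof (rule cSup_eq_maximum)
  show "cmod (z1 - z2) / m \<in> (\<lambda>w. cmod (z1 - z2) / max (cmod (z1 - w)) (cmod (z2 - w))) ` sphere 0 1"
    using assms(1,2) by force
next
  fix y assume "y \<in> (\<lambda>w. cmod (z1 - z2) / max (cmod (z1 - w)) (cmod (z2 - w))) ` sphere 0 1"
  then obtain w where w: "w \<in> sphere 0 1" "y = cmod (z1 - z2) / max (cmod (z1 - w)) (cmod (z2 - w))"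
    by blast
  show "y \<le> cmod (z1 - z2) / m"
    unfolding w(2) by (rule divide_left_mono) (use assms(3) assms(4)[OF w(1)] in auto)
qed

lemma norm_minus_sgn:
  fixes x :: "'a::real_normed_vector"
  assumes "x \<noteq> 0"
  shows "norm (x - sgn x) = \<bar>norm x - 1\<bar>"
proof -
  have "x - sgn x = (norm x - 1) *\<^sub>R sgn x"
    using assms by (simp add: sgn_div_norm algebra_simps)
  then show ?thesis
    using assms by (simp add: norm_sgn)
qed

lemma b_D_inf_radial_case:
  assumes "cmod z1 < 1" "z1 \<noteq> 0" "cmod (z2 - sgn z1) \<le> cmod (z1 - sgn z1)"
  shows "b_D_inf z1 z2 = cmod (z1 - z2) / (1 - min (cmod z1) (cmod z2))"
proof -
  have dist_z1: "cmod (z1 - sgn z1) = 1 - cmod z1"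
    using assms norm_minus_sgn[of z1] by simp
  have "1 - cmod z2 \<le> cmod (z2 - sgn z1)"
    using norm_triangle_ineq2[of "sgn z1" z2] assms(2) by (simp add: norm_sgn norm_minus_commute)
  then have "min (cmod z1) (cmod z2) = cmod z1"
    using assms(3) dist_z1 by simp
  moreover have "b_D_inf z1 z2 = cmod (z1 - z2) / (1 - cmod z1)"
  proof (rule b_D_inf_eq_if_min_max_attained[of "sgn z1"])
    show "sgn z1 \<in> sphere 0 1"
      using assms(2) by (simp add: norm_sgn)
    show "max (cmod (z1 - sgn z1)) (cmod (z2 - sgn z1)) = 1 - cmod z1"
      using assms(3) dist_z1 by simp
    fix w :: complex assume "w \<in> sphere 0 1"
    then have "1 - cmod z1 \<le> cmod (z1 - w)"
      using norm_triangle_ineq2[of w z1] by (simp add: norm_minus_commute)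
    then show "1 - cmod z1 \<le> max (cmod (z1 - w)) (cmod (z2 - w))"
      by simp
  qed (use assms(1) in simp)
  ultimately show ?thesis
    by simp
qed

lemma cmod_diff_square:
  "cmod (w - z)^2 = cmod w^2 + cmod z^2 - 2 * Re (w * cnj z)"
  unfolding cmod_power2 by (simp add: power2_eq_square algebra_simps)

lemma cmod_diff_square_diff_same_Im:
  assumes "Im z1 = Im z2"
  shows "cmod (w - z1)^2 - cmod (w - z2)^2 = (Re z1 - Re z2) * (Re z1 + Re z2 - 2 * Re w)"
  using assms unfolding cmod_power2 by (simp add: power2_eq_square algebra_simps)

lemma cmod_diff_eq_on_bisector:
  assumes "Im z1 = Im z2" "2 * Re w = Re z1 + Re z2"
  shows "cmod (w - z1) = cmod (w - z2)"
proof -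
  have "cmod (w - z1)^2 = cmod (w - z2)^2"
    using cmod_diff_square_diff_same_Im[of z1 z2 w] assms by simp
  then show ?thesis
    by simp
qed

lemma cmod_diff_less_iff_same_Im:
  assumes "Im z1 = Im z2" "Re z2 < Re z1"
  shows "cmod (w - z1) < cmod (w - z2) \<longleftrightarrow> Re z1 + Re z2 < 2 * Re w"
    and "cmod (w - z2) < cmod (w - z1) \<longleftrightarrow> 2 * Re w < Re z1 + Re z2"
proof -
  have "cmod (w - z1) < cmod (w - z2) \<longleftrightarrow> cmod (w - z1)^2 - cmod (w - z2)^2 < 0"
    and "cmod (w - z2) < cmod (w - z1) \<longleftrightarrow> 0 < cmod (w - z1)^2 - cmod (w - z2)^2"
    using abs_le_square_iff[of "cmod (w - z1)" "cmod (w - z2)"]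
      abs_le_square_iff[of "cmod (w - z2)" "cmod (w - z1)"] by (auto simp: not_le[symmetric])
  then show "cmod (w - z1) < cmod (w - z2) \<longleftrightarrow> Re z1 + Re z2 < 2 * Re w"
    and "cmod (w - z2) < cmod (w - z1) \<longleftrightarrow> 2 * Re w < Re z1 + Re z2"
    using cmod_diff_square_diff_same_Im[of z1 z2 w] assms
    by (simp_all add: mult_less_0_iff zero_less_mult_iff)
qed

lemma Im_mult_cnj_nonneg_upper_semicircle:
  fixes w e :: complex
  assumes "cmod w = 1" "cmod e = 1" "0 \<le> Im w" "0 \<le> Im e" "Re w \<le> Re e"
  shows "0 \<le> Im (w * cnj e)"
proof -
  have unit: "Re w^2 + Im w^2 = 1" "Re e^2 + Im e^2 = 1"
    using assms(1,2) cmod_power2[of w] cmod_power2[of e] by simp_all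
  consider "0 \<le> Re w" | "Re e \<le> 0" | "Re w < 0" "0 < Re e"
    by linarith
  then show ?thesis
  proof cases
    case 1
    then have "Re w^2 \<le> Re e^2"
      using assms(5) by (simp add: power_mono)
    then have "Im e^2 \<le> Im w^2"
      using unit by linarith
    then have "Im e \<le> Im w"
      using assms(3) by (rule power2_le_imp_le)
    then have "Re w * Im e \<le> Re e * Im w"
      using 1 assms(4,5) by (intro mult_mono) simp_all
    then show ?thesis
      by (simp add: mult.commute)
  next
    case 2
    then have "Re e^2 \<le> Re w^2"
      using assms(5) power_mono[of "- Re e" "- Re w" 2] by simp
    then have "Im w^2 \<le> Im e^2"
      using unit by linarith
    then have "Im w \<le> Im e"
      using assms(4) by (rule power2_le_imp_le)
    then have "(- Re e) * Im w \<le> (- Re w) * Im e"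
      using 2 assms(3,5) by (intro mult_mono) simp_all
    then show ?thesis
      by (simp add: mult.commute)
  next
    case 3
    then have "Re w * Im e \<le> 0" "0 \<le> Im w * Re e"
      using assms(3,4) by (simp_all add: mult_nonpos_nonneg)
    then show ?thesis
      by simp
  qed
qed

lemma Re_mult_cnj_mono_upper_semicircle:
  fixes w v e :: complex
  assumes "cmod w = 1" "cmod v = 1" "cmod e = 1" "0 \<le> Im w" "0 \<le> Im v" "0 \<le> Im e"
    and "Re w \<le> Re v" "Re v < Re e"
  shows "Re (w * cnj e) \<le> Re (v * cnj e)"
proof (cases "Im w + Im v = 0")
  case True
  then have "Im w = 0" "Im v = 0"
    using assms(4,5) by linarith+
  moreover have "\<bar>Re w\<bar> = 1" "\<bar>Re v\<bar> = 1" "Re e \<le> 1"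
    using assms(1-3) abs_Re_le_cmod[of e] by (simp_all add: cmod_def calculation)
  ultimately have "w = v"
    using assms(7,8) by (simp add: complex_eq_iff abs_if split: if_splits)
  then show ?thesis
    by simp
next
  case False
  then have pos: "0 < Im w + Im v"
    using assms(4,5) by linarith
  have "(Im w + Im v) * Re ((w - v) * cnj e) - (Re w - Re v) * (Im (w * cnj e) + Im (v * cnj e))
      = Im e * ((Re w^2 + Im w^2) - (Re v^2 + Im v^2))"
    by (simp add: power2_eq_square algebra_simps)
  also have "\<dots> = 0"
    using assms(1,2) cmod_power2[of w] cmod_power2[of v] by simp
  finally have "(Im w + Im v) * Re ((w - v) * cnj e) = (Re w - Re v) * (Im (w * cnj e) + Im (v * cnj e))"
    by simp
  also have "\<dots> \<le> 0"
    using assms Im_mult_cnj_nonneg_upper_semicircle[of w e] Im_mult_cnj_nonneg_upper_semicircle[of v e]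
    by (intro mult_nonpos_nonneg) simp_all
  finally have "Re ((w - v) * cnj e) \<le> 0"
    using pos by (simp add: mult_le_0_iff)
  then show ?thesis
    by (simp add: left_diff_distrib)
qed

lemma cmod_diff_ge_min_cnj_pair:
  fixes w v z :: complex
  assumes "cmod w = 1" "cmod v = 1" "0 \<le> Im v" "Re w \<le> Re v" "Re v * cmod z < Re z"
  shows "min (cmod (v - z)) (cmod (cnj v - z)) \<le> cmod (w - z)"
proof -
  have "0 < cmod z"
    using assms(5) by (cases "z = 0") auto
  \<comment> \<open>Reflect w and z into the closed upper half plane, where the inner product with the
    direction of z is monotone.\<close>
  define e where "e = sgn (Complex (Re z) \<bar>Im z\<bar>)"
  have norm_reflect: "cmod (Complex (Re p) \<bar>Im p\<bar>) = cmod p" for p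
    by (simp add: cmod_def)
  have "Re (Complex (Re w) \<bar>Im w\<bar> * cnj e) \<le> Re (v * cnj e)"
  proof (rule Re_mult_cnj_mono_upper_semicircle)
    show "cmod e = 1"
      using \<open>0 < cmod z\<close> norm_reflect[of z] by (auto simp: e_def norm_sgn)
    show "Re v < Re e"
      using assms(5) \<open>0 < cmod z\<close> norm_reflect[of z] by (simp add: e_def pos_less_divide_eq)
  qed (use assms in \<open>simp_all add: e_def norm_reflect\<close>)
  then have "Re w * Re z + \<bar>Im w\<bar> * \<bar>Im z\<bar> \<le> Re v * Re z + Im v * \<bar>Im z\<bar>"
    using \<open>0 < cmod z\<close> by (simp add: e_def norm_reflect add_divide_distrib[symmetric] divide_le_cancel)
  moreover have "Im w * Im z \<le> \<bar>Im w\<bar> * \<bar>Im z\<bar>"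
    by (metis abs_ge_self abs_mult)
  ultimately have "Re (w * cnj z) \<le> Re (v * cnj z) \<or> Re (w * cnj z) \<le> Re (cnj v * cnj z)"
    by (cases "0 \<le> Im z") (simp_all add: abs_of_nonneg abs_of_neg)
  then obtain v' where v': "v' \<in> {v, cnj v}" "Re (w * cnj z) \<le> Re (v' * cnj z)"
    by blast
  then have "cmod (v' - z)^2 \<le> cmod (w - z)^2"
    using assms(1,2) cmod_diff_square[of v' z] cmod_diff_square[of w z] by auto
  then have "cmod (v' - z) \<le> cmod (w - z)"
    by (rule power2_le_imp_le) simp
  then show ?thesis
    using v'(1) by auto
qed

lemma min_max_cmod_diff_ge_bisector:
  fixes z1 z2 v w :: complex
  assumes "Im z1 = Im z2" "2 * Re v = Re z1 + Re z2" "cmod v = 1" "0 \<le> Im v"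
    and "Re v * cmod z1 < Re z1" "Re z2 < Re v * cmod z2" "cmod w = 1"
  shows "min (cmod (v - z1)) (cmod (cnj v - z1)) \<le> max (cmod (w - z1)) (cmod (w - z2))"
proof (cases "Re w \<le> Re v")
  case True
  then have "min (cmod (v - z1)) (cmod (cnj v - z1)) \<le> cmod (w - z1)"
    using assms by (intro cmod_diff_ge_min_cnj_pair) simp_all
  then show ?thesis
    by linarith
next
  case False
  \<comment> \<open>The reflection in the imaginary axis exchanges the roles of z1 and z2.\<close>
  have "min (cmod (- cnj v - - cnj z2)) (cmod (cnj (- cnj v) - - cnj z2)) \<le> cmod (- cnj w - - cnj z2)"
    using assms False by (intro cmod_diff_ge_min_cnj_pair) simp_all
  moreover have "cmod (cnj q - cnj p) = cmod (p - q)" "cmod (cnj q - p) = cmod (q - cnj p)" for p q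
    by (metis complex_cnj_diff complex_mod_cnj norm_minus_commute)
      (metis complex_cnj_cnj complex_cnj_diff complex_mod_cnj)
  ultimately have "min (cmod (v - z2)) (cmod (cnj v - z2)) \<le> cmod (w - z2)"
    by (simp add: norm_minus_commute)
  moreover have "cmod (v - z1) = cmod (v - z2)" "cmod (cnj v - z1) = cmod (cnj v - z2)"
    using assms(1,2) by (simp_all add: cmod_diff_eq_on_bisector)
  ultimately show ?thesis
    by linarith
qed

lemma b_D_inf_bisector_normalised:
  fixes z1 z2 v :: complex
  assumes "Im z1 = Im z2" "Re z2 < Re z1" "z1 \<noteq> 0" "z2 \<noteq> 0"
    and "2 * Re v = Re z1 + Re z2" "cmod v = 1" "0 \<le> Im v"
    and "cmod (z1 - sgn z1) < cmod (z2 - sgn z1)" "cmod (z2 - sgn z2) < cmod (z1 - sgn z2)"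
  shows "b_D_inf z1 z2 = cmod (z1 - z2) / min (cmod (v - z1)) (cmod (cnj v - z1))"
proof -
  have Re_v: "Re v = (Re z1 + Re z2) / 2"
    using assms(5) by simp
  have "Re v * cmod z1 < Re z1" "Re z2 < Re v * cmod z2"
    using cmod_diff_less_iff_same_Im[of z1 z2 "sgn z1"] cmod_diff_less_iff_same_Im[of z1 z2 "sgn z2"]
      assms unfolding Re_v by (simp_all add: norm_minus_commute field_simps)
  then have "v \<noteq> z1" "cnj v \<noteq> z1"
    using assms(6) by auto
  define w0 where "w0 = (if cmod (v - z1) \<le> cmod (cnj v - z1) then v else cnj v)"
  show ?thesis
  proof (rule b_D_inf_eq_if_min_max_attained[of w0])
    show "w0 \<in> sphere 0 1"
      using assms(6) by (simp add: w0_def)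
    have "cmod (v - z1) = cmod (v - z2)" "cmod (cnj v - z1) = cmod (cnj v - z2)"
      using assms(1,5) by (simp_all add: cmod_diff_eq_on_bisector)
    then show "max (cmod (z1 - w0)) (cmod (z2 - w0)) = min (cmod (v - z1)) (cmod (cnj v - z1))"
      by (simp add: w0_def norm_minus_commute)
    show "0 < min (cmod (v - z1)) (cmod (cnj v - z1))"
      using \<open>v \<noteq> z1\<close> \<open>cnj v \<noteq> z1\<close> by simp
    fix w :: complex assume "w \<in> sphere 0 1"
    then show "min (cmod (v - z1)) (cmod (cnj v - z1)) \<le> max (cmod (z1 - w)) (cmod (z2 - w))"
      using min_max_cmod_diff_ge_bisector[of z1 z2 v w] assms \<open>Re v * cmod z1 < Re z1\<close>
        \<open>Re z2 < Re v * cmod z2\<close> by (simp add: norm_minus_commute)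
  qed
qed

lemma b_D_inf_bisector_case:
  fixes z1 z2 :: complex
  defines "a \<equiv> (cmod z1 ^ 2 - cmod z2 ^ 2) / (2 * cmod (z1 - z2))"
    and "u \<equiv> (z1 - z2) / complex_of_real (cmod (z1 - z2))"
  assumes "cmod z1 \<le> 1" "cmod z2 \<le> 1" "z1 \<noteq> 0" "z2 \<noteq> 0" "z1 \<noteq> z2"
    and "cmod (z1 - sgn z1) < cmod (z2 - sgn z1)" "cmod (z2 - sgn z2) < cmod (z1 - sgn z2)"
  shows "b_D_inf z1 z2 = cmod (z1 - z2) /
    min (cmod (u * Complex a (sqrt (1 - a^2)) - z1)) (cmod (u * Complex a (- sqrt (1 - a^2)) - z1))"
proof -
  define c where "c = cmod (z1 - z2)"
  have "0 < c"
    using assms(7) by (simp add: c_def)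
  have diff_eq: "z1 - z2 = u * complex_of_real c"
    using \<open>0 < c\<close> by (simp add: u_def c_def)
  have "cmod u = 1"
    using \<open>0 < c\<close> by (simp add: u_def c_def[symmetric] norm_divide)
  then have "cnj u * u = 1"
    using complex_norm_square[of u] by (simp add: mult.commute)
  define y1 where "y1 = cnj u * z1"
  define y2 where "y2 = cnj u * z2"
  have z_eq: "z1 = u * y1" "z2 = u * y2"
    using \<open>cnj u * u = 1\<close> by (metis y1_def y2_def mult.assoc mult.commute mult_1)+
  have rot: "cmod (u * p - u * q) = cmod (p - q)" "sgn (u * p) = u * sgn p" for p q
    using \<open>cmod u = 1\<close> by (simp_all add: norm_mult sgn_mult sgn_div_norm flip: right_diff_distrib)
  have "y1 - y2 = complex_of_real c"
    using \<open>cnj u * u = 1\<close> by (simp add: y1_def y2_def diff_eq mult.assoc[symmetric]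
        flip: right_diff_distrib)
  then have Im_eq: "Im y1 = Im y2" and Re_diff: "Re y1 - Re y2 = c"
    by (simp_all add: complex_eq_iff)
  have norms: "cmod y1 = cmod z1" "cmod y2 = cmod z2"
    using \<open>cmod u = 1\<close> by (simp_all add: z_eq norm_mult)
  have a_eq: "2 * a = Re y1 + Re y2"
  proof -
    have "cmod y1^2 - cmod y2^2 = c * (Re y1 + Re y2)"
      using cmod_diff_square_diff_same_Im[of y1 y2 0] Im_eq Re_diff by simp
    then show ?thesis
      using \<open>0 < c\<close> unfolding a_def c_def[symmetric] norms[symmetric] by (simp add: field_simps)
  qed
  have "\<bar>a\<bar> \<le> 1"
    using abs_Re_le_cmod[of y1] abs_Re_le_cmod[of y2] a_eq norms assms(3,4) by linarith
  then have "a^2 \<le> 1"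
    by (simp add: abs_square_le_1)
  define v where "v = Complex a (sqrt (1 - a^2))"
  have "cmod v = 1"
    using \<open>a^2 \<le> 1\<close> by (simp add: v_def cmod_def)
  have "b_D_inf y1 y2 = cmod (y1 - y2) / min (cmod (v - y1)) (cmod (cnj v - y1))"
  proof (rule b_D_inf_bisector_normalised)
    show "cmod (y1 - sgn y1) < cmod (y2 - sgn y1)" "cmod (y2 - sgn y2) < cmod (y1 - sgn y2)"
      using assms(8,9) by (simp_all add: z_eq rot)
  qed (use Im_eq Re_diff \<open>0 < c\<close> assms(5,6) a_eq \<open>cmod v = 1\<close> \<open>a^2 \<le> 1\<close>
      in \<open>auto simp: v_def z_eq\<close>)
  moreover have "cnj v = Complex a (- sqrt (1 - a^2))"
    by (simp add: v_def complex_eq_iff)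
  ultimately show ?thesis
    using b_D_inf_mult_unit[OF \<open>cmod u = 1\<close>, of y1 y2]
    by (simp add: z_eq rot flip: v_def)
qed

theorem theorem3p29:
  fixes z1 z2 z' z'' :: complex
  assumes "z1 \<in> ball 0 1" and "z2 \<in> ball 0 1"
    and "z1 \<noteq> 0" and "z2 \<noteq> 0" and "z1 \<noteq> z2"
    and "{z', z''} =
      (\<lambda>s. (z1 - z2) / complex_of_real (cmod (z1 - z2)) *
         (complex_of_real ((cmod z1 ^ 2 - cmod z2 ^ 2) / (2 * cmod (z1 - z2)))
          + s * \<i> * complex_of_real
              (sqrt (1 - ((cmod z1 ^ 2 - cmod z2 ^ 2) / (2 * cmod (z1 - z2))) ^ 2))))
      ` {1, -1}"
  shows "b_D_inf z1 z2 =
    (if cmod z1 \<le> 1 - cmod (z2 - z1 / complex_of_real (cmod z1))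
        \<or> cmod z2 \<le> 1 - cmod (z1 - z2 / complex_of_real (cmod z2))
     then cmod (z1 - z2) / (1 - min (cmod z1) (cmod z2))
     else cmod (z1 - z2) / min (cmod (z' - z1)) (cmod (z'' - z1)))"
proof -
  have in_disc: "cmod z1 < 1" "cmod z2 < 1"
    using assms(1,2) by simp_all
  have radial_iff: "cmod z \<le> 1 - cmod (w - z / complex_of_real (cmod z))
      \<longleftrightarrow> cmod (w - sgn z) \<le> cmod (z - sgn z)" if "cmod z < 1" "z \<noteq> 0" for z w :: complex
    using norm_minus_sgn[of z] that by (auto simp flip: sgn_eq)
  define a where "a = (cmod z1 ^ 2 - cmod z2 ^ 2) / (2 * cmod (z1 - z2))"
  define u where "u = (z1 - z2) / complex_of_real (cmod (z1 - z2))"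
  show ?thesis
  proof (cases "cmod (z2 - sgn z1) \<le> cmod (z1 - sgn z1) \<or> cmod (z1 - sgn z2) \<le> cmod (z2 - sgn z2)")
    case True
    then have "b_D_inf z1 z2 = cmod (z1 - z2) / (1 - min (cmod z1) (cmod z2))"
      using b_D_inf_radial_case[of z1 z2] b_D_inf_radial_case[of z2 z1] in_disc assms(3,4)
      by (auto simp: b_D_inf_commute norm_minus_commute min.commute)
    then show ?thesis
      using True radial_iff in_disc assms(3,4) by simp
  next
    case False
    have "{z', z''} = {u * Complex a (sqrt (1 - a^2)), u * Complex a (- sqrt (1 - a^2))}"
      using assms(6) by (simp add: a_def u_def Complex_eq)
    then have "min (cmod (z' - z1)) (cmod (z'' - z1)) =
        min (cmod (u * Complex a (sqrt (1 - a^2)) - z1)) (cmod (u * Complex a (- sqrt (1 - a^2)) - z1))"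
      by (auto simp: doubleton_eq_iff min.commute)
    then show ?thesis
      using False b_D_inf_bisector_case[of z1 z2] radial_iff in_disc assms(3-5)
      by (simp add: a_def u_def not_le)
  qed
qed

end
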